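(* Let $\bm X=X_1\times\cdots\times X_n\in\mathbb{IR}^n$ with $\operatorname{wid}(X_i)>0$ for at least one $i$. Let $Z\subseteq\mathbb{R}$ be convex with $\sum_{i=1}^n x_i\in Z$ for all $\bm x\in\bm X$, and let $\varphi:Z\to\mathbb{R}$ be convex. Define $\mathcal P=\{j:\operatorname{wid}(X_j)>0\}$, $\theta_i=\operatorname{wid}(X_i)/\sum_{j\in\mathcal P}\operatorname{wid}(X_j)$ for $i\in\mathcal P$, $\underline\sigma=\sum_{i=1}^n\underline X_i$, $\overline\sigma=\sum_{i=1}^n\overline X_i$. Then for all $\bm x\in\bm X$, $$\varphi\Big(\sum_{i=1}^n x_i\Big)\ge\sum_{i=1}^n\varphi(x_i-\underline X_i+\underline\sigma)-(n-1)\varphi(\underline\sigma)=\sum_{i\in\mathcal P}\Big(\varphi(x_i-\underline X_i+\underline\sigma)-(1-\theta_i)\varphi(\underline\sigma)\Big),$$ $$\varphi\Big(\sum_{i=1}^n x_i\Big)\ge\sum_{i=1}^n\varphi(x_i-\overline X_i+\overline\sigma)-(n-1)\varphi(\overline\sigma)=\sum_{i\in\mathcal P}\Big(\varphi(x_i-\overline X_i+\overline\sigma)-(1-\theta_i)\varphi(\overline\sigma)\Big).$$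
   Context: $\mathbb{IR}^n$ is the set of boxes $\bm X=X_1\times\cdots\times X_n$ with $X_i=[\underline X_i,\overline X_i]$ compact real intervals; $\operatorname{wid}(X_i)=\overline X_i-\underline X_i$. *)

theory Defs
  imports "HOL-Analysis.Analysis"
begin

end

theory Submission
  imports Defs
begin

text \<open>For convex \<open>\<phi>\<close> the increment \<open>y \<mapsto> \<phi> (s + y) - \<phi> s\<close> is superadditive on
  numbers of equal sign: if \<open>A\<close> and \<open>a\<close> have the same sign, \<open>s + A\<close> and \<open>s + a\<close> lie
  symmetrically in the segment between \<open>s\<close> and \<open>s + A + a\<close>, and adding the two convexity
  inequalities gives \<open>\<phi> (s + A) + \<phi> (s + a) \<le> \<phi> s + \<phi> (s + A + a)\<close>. Applied with \<open>s\<close>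
  the sum of the lower (upper) endpoints to the increments \<open>x\<^sub>i - X\<^sub>i\<close>, all \<open>\<ge> 0\<close>
  (all \<open>\<le> 0\<close>), this gives the two inequalities. The identities hold because \<open>x\<^sub>i\<close>
  coincides with both endpoints for \<open>i \<notin> P\<close> and the \<open>\<theta>\<^sub>i\<close> sum to one.\<close>

lemma convex_on_mirror_points_le:
  fixes \<phi> :: "real \<Rightarrow> real"
  assumes "convex_on Z \<phi>" "p \<in> Z" "q \<in> Z" "0 \<le> t" "t \<le> 1"
  shows "\<phi> ((1 - t) * p + t * q) + \<phi> (t * p + (1 - t) * q) \<le> \<phi> p + \<phi> q"
proof -
  have "\<phi> ((1 - t) * p + t * q) \<le> (1 - t) * \<phi> p + t * \<phi> q"
    using convex_onD[OF assms(1), of t p q] assms(2-5) by simp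
  moreover have "\<phi> (t * p + (1 - t) * q) \<le> t * \<phi> p + (1 - t) * \<phi> q"
    using convex_onD[OF assms(1), of "1 - t" p q] assms(2-5) by simp
  ultimately show ?thesis by (simp add: algebra_simps)
qed

lemma convex_on_add_same_sign_le:
  fixes \<phi> :: "real \<Rightarrow> real"
  assumes "convex_on Z \<phi>" "s \<in> Z" "s + A + a \<in> Z" "0 \<le> A * a"
  shows "\<phi> (s + A) + \<phi> (s + a) \<le> \<phi> s + \<phi> (s + A + a)"
proof (cases "A + a = 0")
  case True
  then have "a * a \<le> 0"
    using assms(4) by (simp add: add_eq_0_iff)
  then have "a = 0" "A = 0"
    using True by (auto simp: mult_le_0_iff)
  then show ?thesis by simp
next
  case False
  define t where "t = A / (A + a)"
  have t: "0 \<le> t" "t \<le> 1"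
    using assms(4) False by (auto simp: t_def zero_le_mult_iff zero_le_divide_iff divide_le_eq_1)
  have "t * (A + a) = A"
    using False by (simp add: t_def)
  then have "s + A = (1 - t) * s + t * (s + A + a)" "s + a = t * s + (1 - t) * (s + A + a)"
    by (simp_all add: algebra_simps)
  then show ?thesis
    using convex_on_mirror_points_le[OF assms(1-3) t] by simp
qed

lemma convex_on_sum_increments_le:
  fixes \<phi> :: "real \<Rightarrow> real" and a :: "'i \<Rightarrow> real"
  assumes "convex Z" "convex_on Z \<phi>" "finite I"
    and sign: "(\<forall>i\<in>I. 0 \<le> a i) \<or> (\<forall>i\<in>I. a i \<le> 0)"
    and "s \<in> Z" "s + sum a I \<in> Z"
  shows "(\<Sum>i\<in>I. \<phi> (s + a i) - \<phi> s) \<le> \<phi> (s + sum a I) - \<phi> s"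
  using assms(3) sign assms(6)
proof (induction I rule: finite_induct)
  case empty
  then show ?case by simp
next
  case (insert j F)
  have total: "s + sum a F + a j \<in> Z"
    using insert.prems(2) insert.hyps by (simp add: ac_simps)
  have interval: "\<And>u v w. u \<in> Z \<Longrightarrow> w \<in> Z \<Longrightarrow> u \<le> v \<Longrightarrow> v \<le> w \<Longrightarrow> v \<in> Z"
    using assms(1) unfolding is_interval_convex_1[symmetric] is_interval_1 by blast
  have "0 \<le> sum a F * a j \<and> s + sum a F \<in> Z"
    using insert.prems(1)
  proof (elim disjE)
    assume "\<forall>i\<in>insert j F. 0 \<le> a i"
    then have "0 \<le> sum a F" "0 \<le> a j"
      by (simp_all add: sum_nonneg)
    then show ?thesis
      using interval[OF \<open>s \<in> Z\<close> total] by simp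
  next
    assume "\<forall>i\<in>insert j F. a i \<le> 0"
    then have "sum a F \<le> 0" "a j \<le> 0"
      by (simp_all add: sum_nonpos)
    then show ?thesis
      using interval[OF total \<open>s \<in> Z\<close>] by (simp add: mult_nonpos_nonpos)
  qed
  then have "\<phi> (s + sum a F) + \<phi> (s + a j) \<le> \<phi> s + \<phi> (s + sum a F + a j)"
    and "(\<Sum>i\<in>F. \<phi> (s + a i) - \<phi> s) \<le> \<phi> (s + sum a F) - \<phi> s"
    using convex_on_add_same_sign_le[OF assms(2) \<open>s \<in> Z\<close> total] insert.IH insert.prems(1)
    by auto
  then show ?case
    using insert.hyps by (simp add: ac_simps)
qed

lemma convex_on_sum_shifted_le:
  fixes \<phi> :: "real \<Rightarrow> real" and x c :: "'i \<Rightarrow> real"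
  assumes "convex Z" "convex_on Z \<phi>" "finite I"
    and "(\<forall>i\<in>I. c i \<le> x i) \<or> (\<forall>i\<in>I. x i \<le> c i)"
    and "sum c I \<in> Z" "sum x I \<in> Z"
  shows "(\<Sum>i\<in>I. \<phi> (x i - c i + sum c I)) - (real (card I) - 1) * \<phi> (sum c I) \<le> \<phi> (sum x I)"
proof -
  have "sum c I + (\<Sum>i\<in>I. x i - c i) = sum x I"
    by (simp add: sum_subtractf)
  then have "(\<Sum>i\<in>I. \<phi> (sum c I + (x i - c i)) - \<phi> (sum c I)) \<le> \<phi> (sum x I) - \<phi> (sum c I)"
    using convex_on_sum_increments_le[OF assms(1-3), of "\<lambda>i. x i - c i" "sum c I"] assms(4-6)
    by auto
  then show ?thesis
    by (simp add: sum_subtractf algebra_simps)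
qed

lemma sum_minus_card_eq_sum_weighted:
  fixes f \<theta> :: "'i \<Rightarrow> real"
  assumes "finite I" "P \<subseteq> I" "\<forall>i\<in>I - P. f i = c" "sum \<theta> P = 1"
  shows "sum f I - (real (card I) - 1) * c = (\<Sum>i\<in>P. f i - (1 - \<theta> i) * c)"
proof -
  have "sum f I = sum f P + (\<Sum>i\<in>I - P. f i)"
    using sum.subset_diff[OF assms(2,1)] by (metis add.commute)
  also have "\<dots> = sum f P + (\<Sum>i\<in>I - P. c)"
    using assms(3) by simp
  also have "\<dots> = sum f P + (real (card I) - real (card P)) * c"
    using assms(1,2) by (simp add: card_Diff_subset finite_subset of_nat_diff card_mono)
  finally have "sum f I = sum f P + (real (card I) - real (card P)) * c" .
  moreover have "(\<Sum>i\<in>P. f i - (1 - \<theta> i) * c) = sum f P - (real (card P) - sum \<theta> P) * c"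
    by (simp add: sum_subtractf sum_distrib_right[symmetric])
  ultimately show ?thesis
    using assms(4) by (simp add: algebra_simps)
qed

lemma sum_divide_sum_eq_1:
  fixes w :: "'i \<Rightarrow> real"
  assumes "finite P" "P \<noteq> {}" "\<forall>i\<in>P. 0 < w i"
  shows "(\<Sum>i\<in>P. w i / sum w P) = 1"
  using sum_pos[of P w] assms by (simp add: sum_divide_distrib[symmetric])

theorem proposition3:
  fixes n :: nat and Xlo Xhi :: "nat \<Rightarrow> real" and Z :: "real set"
    and \<phi> :: "real \<Rightarrow> real" and x :: "nat \<Rightarrow> real"
  assumes box: "\<forall>i\<in>{1..n}. Xlo i \<le> Xhi i"
    and somepos: "\<exists>i\<in>{1..n}. Xhi i - Xlo i > 0"
    and Zconv: "convex Z"
    and sumZ: "\<forall>y. (\<forall>i\<in>{1..n}. Xlo i \<le> y i \<and> y i \<le> Xhi i) \<longrightarrow> (\<Sum>i=1..n. y i) \<in> Z"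
    and phiconv: "convex_on Z \<phi>"
    and xin: "\<forall>i\<in>{1..n}. Xlo i \<le> x i \<and> x i \<le> Xhi i"
  defines "P \<equiv> {j\<in>{1..n}. Xhi j - Xlo j > 0}"
    and "\<theta> \<equiv> (\<lambda>i. (Xhi i - Xlo i) / (\<Sum>j\<in>{k\<in>{1..n}. Xhi k - Xlo k > 0}. Xhi j - Xlo j))"
    and "slo \<equiv> (\<Sum>i=1..n. Xlo i)"
    and "shi \<equiv> (\<Sum>i=1..n. Xhi i)"
  shows "\<phi> (\<Sum>i=1..n. x i) \<ge> (\<Sum>i=1..n. \<phi> (x i - Xlo i + slo)) - (real n - 1) * \<phi> slo
       \<and> (\<Sum>i=1..n. \<phi> (x i - Xlo i + slo)) - (real n - 1) * \<phi> slo
           = (\<Sum>i\<in>P. \<phi> (x i - Xlo i + slo) - (1 - \<theta> i) * \<phi> slo)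
       \<and> \<phi> (\<Sum>i=1..n. x i) \<ge> (\<Sum>i=1..n. \<phi> (x i - Xhi i + shi)) - (real n - 1) * \<phi> shi
       \<and> (\<Sum>i=1..n. \<phi> (x i - Xhi i + shi)) - (real n - 1) * \<phi> shi
           = (\<Sum>i\<in>P. \<phi> (x i - Xhi i + shi) - (1 - \<theta> i) * \<phi> shi)"
proof -
  have "slo \<in> Z" "shi \<in> Z" "(\<Sum>i=1..n. x i) \<in> Z"
    using sumZ[rule_format, of Xlo] sumZ[rule_format, of Xhi] sumZ[rule_format, of x] box xin
    unfolding slo_def shi_def by auto
  then have ineqs:
    "(\<Sum>i=1..n. \<phi> (x i - Xlo i + slo)) - (real n - 1) * \<phi> slo \<le> \<phi> (\<Sum>i=1..n. x i)"
    "(\<Sum>i=1..n. \<phi> (x i - Xhi i + shi)) - (real n - 1) * \<phi> shi \<le> \<phi> (\<Sum>i=1..n. x i)"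
    using convex_on_sum_shifted_le[OF Zconv phiconv finite_atLeastAtMost[of 1 n], where c = Xlo and x = x]
      convex_on_sum_shifted_le[OF Zconv phiconv finite_atLeastAtMost[of 1 n], where c = Xhi and x = x] xin
    unfolding slo_def shi_def by auto
  have "\<theta> = (\<lambda>i. (Xhi i - Xlo i) / (\<Sum>j\<in>P. Xhi j - Xlo j))"
    unfolding \<theta>_def P_def ..
  moreover have "P \<noteq> {}"
    using somepos unfolding P_def by auto
  ultimately have weights: "sum \<theta> P = 1"
    by (simp add: sum_divide_sum_eq_1 P_def)
  have "P \<subseteq> {1..n}"
    unfolding P_def by auto
  note weighted = sum_minus_card_eq_sum_weighted[OF finite_atLeastAtMost this _ weights]
  have "\<forall>i\<in>{1..n} - P. Xlo i = x i \<and> Xhi i = x i"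
    using box xin unfolding P_def by force
  then have eqs:
    "(\<Sum>i=1..n. \<phi> (x i - Xlo i + slo)) - (real n - 1) * \<phi> slo
       = (\<Sum>i\<in>P. \<phi> (x i - Xlo i + slo) - (1 - \<theta> i) * \<phi> slo)"
    "(\<Sum>i=1..n. \<phi> (x i - Xhi i + shi)) - (real n - 1) * \<phi> shi
       = (\<Sum>i\<in>P. \<phi> (x i - Xhi i + shi) - (1 - \<theta> i) * \<phi> shi)"
    using weighted[of "\<lambda>i. \<phi> (x i - Xlo i + slo)" "\<phi> slo"]
      weighted[of "\<lambda>i. \<phi> (x i - Xhi i + shi)" "\<phi> shi"]
    by simp_all
  show ?thesis
    using ineqs eqs by simp
qed

end
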